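(* Let $X$ be a compact metric space whose metric $d$ is an ultrametric, let $0<L<1$, and let $f\colon X\to X$ be a continuous map. The following are equivalent: (1) $f$ has the $L$-Lipschitz shadowing property; (2) there is $\delta_0>0$ such that $B_\delta(f(x))\subset f(B_{L\delta}(x))$ for all $0<\delta\le\delta_0$ and all $x\in X$.
   Context: $d$ is an ultrametric: $d(x,z)\le\max\{d(x,y),d(y,z)\}$ for all $x,y,z$. $B_r(x)=\{y\in X: d(x,y)\le r\}$ is the closed $r$-ball. For $\delta>0$, a sequence $(x_i)_{i\ge0}$ is a $\delta$-pseudo orbit of $f$ if $d(f(x_i),x_{i+1})\le\delta$ for all $i\ge0$; it is $\epsilon$-shadowed by $x$ if $d(f^i(x),x_i)\le\epsilon$ for all $i\ge0$. $f$ has the $L$-Lipschitz shadowing property if there is $\delta_0>0$ such that for every $0<\delta\le\delta_0$, every $\delta$-pseudo orbit of $f$ is $L\delta$-shadowed by some point of $X$. *)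

theory Defs
  imports "HOL-Analysis.Analysis"
begin

definition ultrametric_space :: "'a::metric_space itself \<Rightarrow> bool" where
  "ultrametric_space _ \<longleftrightarrow> (\<forall>x y z::'a. dist x z \<le> max (dist x y) (dist y z))"

definition pseudo_orbit :: "('a::metric_space \<Rightarrow> 'a) \<Rightarrow> real \<Rightarrow> (nat \<Rightarrow> 'a) \<Rightarrow> bool" where
  "pseudo_orbit f \<delta> xs \<longleftrightarrow> (\<forall>i. dist (f (xs i)) (xs (Suc i)) \<le> \<delta>)"

definition shadows :: "('a::metric_space \<Rightarrow> 'a) \<Rightarrow> real \<Rightarrow> 'a \<Rightarrow> (nat \<Rightarrow> 'a) \<Rightarrow> bool" where
  "shadows f \<epsilon> x xs \<longleftrightarrow> (\<forall>i. dist ((f ^^ i) x) (xs i) \<le> \<epsilon>)"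

definition lipschitz_shadowing :: "real \<Rightarrow> ('a::metric_space \<Rightarrow> 'a) \<Rightarrow> bool" where
  "lipschitz_shadowing L f \<longleftrightarrow>
     (\<exists>\<delta>0>0. \<forall>\<delta>. 0 < \<delta> \<and> \<delta> \<le> \<delta>0 \<longrightarrow>
        (\<forall>xs. pseudo_orbit f \<delta> xs \<longrightarrow> (\<exists>x. shadows f (L * \<delta>) x xs)))"

end

theory Submission
  imports Defs
begin

text \<open>
  Both directions rest on the ultrametric inequality: a point within \<open>L\<delta> \<le> \<delta>\<close> of the next
  term of a \<open>\<delta>\<close>-pseudo orbit already lies in the \<open>\<delta>\<close>-ball around the image of the previous
  term, so errors never accumulate.

  If every \<open>\<delta>\<close>-pseudo orbit is \<open>L\<delta>\<close>-shadowed and \<open>d(f x, y) \<le> \<delta>\<close>, shadowing the pseudo orbit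
  \<open>x, y, f y, f\<^sup>2 y, \<dots>\<close> gives a point \<open>z\<close> with \<open>d(z, x) \<le> L\<delta>\<close> and \<open>d(f z, y) \<le> L\<delta>\<close>; repeating
  this from \<open>z\<close> with the smaller error \<open>L\<delta>\<close> and so on produces points of \<open>B\<^bsub>L\<delta>\<^esub>(x)\<close> whose images
  converge to \<open>y\<close>, and \<open>f(B\<^bsub>L\<delta>\<^esub>(x))\<close> is compact.

  Conversely, if \<open>B\<^sub>\<delta>(f x) \<subseteq> f(B\<^bsub>L\<delta>\<^esub>(x))\<close>, a finite piece \<open>x\<^sub>0, \<dots>, x\<^sub>n\<close> of a \<open>\<delta>\<close>-pseudo orbit is
  \<open>L\<delta>\<close>-shadowed by pulling \<open>x\<^sub>n\<close> back step by step; by compactness the closed sets of points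
  shadowing the first \<open>n\<close> terms have a common point, which shadows the whole pseudo orbit.
\<close>

lemma ultrametric_dist_le_max:
  assumes "ultrametric_space TYPE('a::metric_space)"
  shows "dist x z \<le> max (dist x y) (dist y (z::'a))"
  using assms unfolding ultrametric_space_def by blast

lemma continuous_on_funpow:
  fixes f :: "'a::topological_space \<Rightarrow> 'a"
  assumes "continuous_on UNIV f"
  shows "continuous_on UNIV (f ^^ n)"
proof (induction n)
  case 0
  show ?case by (simp add: continuous_on_id)
next
  case (Suc n)
  have "continuous_on UNIV (f \<circ> (f ^^ n))"
    by (rule continuous_on_compose) (use Suc assms in \<open>auto elim: continuous_on_subset\<close>)
  then show ?case by simp
qed

lemma shadowing_imp_approx_preimage:
  fixes f :: "'a::metric_space \<Rightarrow> 'a"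
  assumes ultra: "ultrametric_space TYPE('a)"
    and L: "0 < L" "L \<le> 1" and "0 < \<delta>"
    and shadowing: "\<And>\<eta> xs. 0 < \<eta> \<Longrightarrow> \<eta> \<le> \<delta> \<Longrightarrow> pseudo_orbit f \<eta> xs \<Longrightarrow> \<exists>x. shadows f (L * \<eta>) x xs"
    and "dist (f x) y \<le> \<delta>"
  shows "\<exists>z. dist z x \<le> L * \<delta> \<and> dist (f z) y \<le> L ^ n * \<delta>"
proof (induction n)
  case 0
  show ?case using assms by (intro exI[of _ x]) auto
next
  case (Suc n)
  then obtain z where z: "dist z x \<le> L * \<delta>" "dist (f z) y \<le> L ^ n * \<delta>" by blast
  define \<eta> where "\<eta> = L ^ n * \<delta>"
  have "L ^ n \<le> 1" using L by (simp add: power_le_one)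
  then have \<eta>: "\<eta> \<le> \<delta>" using \<open>0 < \<delta>\<close> unfolding \<eta>_def by (simp add: mult_left_le_one_le)
  have "0 < \<eta>" using L \<open>0 < \<delta>\<close> unfolding \<eta>_def by simp
  define xs where "xs i = (case i of 0 \<Rightarrow> z | Suc j \<Rightarrow> (f ^^ j) y)" for i
  have "pseudo_orbit f \<eta> xs"
    unfolding pseudo_orbit_def
  proof
    fix i show "dist (f (xs i)) (xs (Suc i)) \<le> \<eta>"
      using z \<open>0 < \<eta>\<close> by (cases i) (auto simp: xs_def \<eta>_def)
  qed
  then obtain w where "shadows f (L * \<eta>) w xs"
    using shadowing \<open>0 < \<eta>\<close> \<eta> by blast
  then have "dist ((f ^^ 0) w) (xs 0) \<le> L * \<eta>" "dist ((f ^^ 1) w) (xs 1) \<le> L * \<eta>"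
    unfolding shadows_def by blast+
  then have w: "dist w z \<le> L * \<eta>" "dist (f w) y \<le> L * \<eta>"
    by (simp_all add: xs_def)
  have "L * \<eta> \<le> L * \<delta>" using \<eta> L by (simp add: mult_left_mono)
  then have "dist w x \<le> L * \<delta>"
    using ultrametric_dist_le_max[OF ultra, of w x z] w z by simp
  moreover have "dist (f w) y \<le> L ^ Suc n * \<delta>"
    using w by (simp add: \<eta>_def mult.assoc)
  ultimately show ?case by blast
qed

lemma lipschitz_shadowing_imp_cball_subset_image:
  fixes f :: "'a::metric_space \<Rightarrow> 'a"
  assumes compact: "compact (UNIV :: 'a set)"
    and ultra: "ultrametric_space TYPE('a)"
    and L: "0 < L" "L < 1"
    and cont: "continuous_on UNIV f"
    and "lipschitz_shadowing L f"
  shows "\<exists>\<delta>0>0. \<forall>\<delta> x. 0 < \<delta> \<and> \<delta> \<le> \<delta>0 \<longrightarrow> cball (f x) \<delta> \<subseteq> f ` cball x (L * \<delta>)"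
proof -
  obtain \<delta>0 where "\<delta>0 > 0" and shadowing:
    "\<And>\<delta> xs. 0 < \<delta> \<Longrightarrow> \<delta> \<le> \<delta>0 \<Longrightarrow> pseudo_orbit f \<delta> xs \<Longrightarrow> \<exists>x. shadows f (L * \<delta>) x xs"
    using \<open>lipschitz_shadowing L f\<close> unfolding lipschitz_shadowing_def by blast
  have "y \<in> f ` cball x (L * \<delta>)"
    if \<delta>: "0 < \<delta>" "\<delta> \<le> \<delta>0" and y: "dist (f x) y \<le> \<delta>" for \<delta> x y
  proof -
    have shadowing_upto_\<delta>:
      "\<exists>z. shadows f (L * \<eta>) z xs" if "0 < \<eta>" "\<eta> \<le> \<delta>" "pseudo_orbit f \<eta> xs" for \<eta> xs
      using that \<delta> by (intro shadowing) auto
    have closed: "closed (f ` cball x (L * \<delta>))"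
    proof (rule compact_imp_closed, rule compact_continuous_image)
      show "continuous_on (cball x (L * \<delta>)) f"
        using cont by (rule continuous_on_subset) simp
      show "compact (cball x (L * \<delta>))"
        using compact_Int_closed[OF compact closed_cball, of x "L * \<delta>"] by simp
    qed
    have "\<exists>u\<in>f ` cball x (L * \<delta>). dist u y < e" if "e > 0" for e
    proof -
      have "e / \<delta> > 0" using \<open>e > 0\<close> \<delta> by simp
      then obtain n where "L ^ n < e / \<delta>"
        using real_arch_pow_inv[OF _ \<open>L < 1\<close>] by blast
      then have "L ^ n * \<delta> < e" using \<delta> by (simp add: pos_less_divide_eq)
      moreover obtain z where "dist z x \<le> L * \<delta>" "dist (f z) y \<le> L ^ n * \<delta>"
        using shadowing_imp_approx_preimage[OF ultra \<open>0 < L\<close> less_imp_le[OF \<open>L < 1\<close>]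
            \<open>0 < \<delta>\<close> shadowing_upto_\<delta> y]
        by blast
      ultimately show ?thesis by (intro bexI[of _ "f z"]) (auto simp: dist_commute)
    qed
    then show ?thesis using closed_approachable[OF closed] by blast
  qed
  then show ?thesis using \<open>\<delta>0 > 0\<close> by (intro exI[of _ \<delta>0]) auto
qed

lemma cball_subset_image_imp_finite_shadowing:
  fixes f :: "'a::metric_space \<Rightarrow> 'a"
  assumes ultra: "ultrametric_space TYPE('a)"
    and "L * \<delta> \<le> \<delta>"
    and cover: "\<And>x. cball (f x) \<delta> \<subseteq> f ` cball x (L * \<delta>)"
    and "pseudo_orbit f \<delta> xs"
    and "dist w (xs n) \<le> L * \<delta>"
  shows "\<exists>z. (f ^^ n) z = w \<and> (\<forall>i\<le>n. dist ((f ^^ i) z) (xs i) \<le> L * \<delta>)"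
  using \<open>dist w (xs n) \<le> L * \<delta>\<close>
proof (induction n arbitrary: w)
  case 0
  then show ?case by auto
next
  case (Suc n)
  have "dist (f (xs n)) (xs (Suc n)) \<le> \<delta>"
    using \<open>pseudo_orbit f \<delta> xs\<close> unfolding pseudo_orbit_def by blast
  then have "dist w (f (xs n)) \<le> \<delta>"
    using ultrametric_dist_le_max[OF ultra, of w "f (xs n)" "xs (Suc n)"] Suc.prems
      \<open>L * \<delta> \<le> \<delta>\<close>
    by (simp add: dist_commute)
  then obtain v where "dist (xs n) v \<le> L * \<delta>" and "w = f v"
    using cover[of "xs n"] by (auto simp: dist_commute)
  then obtain z where z: "(f ^^ n) z = v" "\<forall>i\<le>n. dist ((f ^^ i) z) (xs i) \<le> L * \<delta>"
    using Suc.IH[of v] by (auto simp: dist_commute)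
  have "(f ^^ Suc n) z = w" using z \<open>w = f v\<close> by simp
  moreover have "\<forall>i\<le>Suc n. dist ((f ^^ i) z) (xs i) \<le> L * \<delta>"
    using z Suc.prems \<open>(f ^^ Suc n) z = w\<close> by (auto simp: le_Suc_eq)
  ultimately show ?case by blast
qed

lemma shadows_if_finitely_shadowed:
  fixes f :: "'a::metric_space \<Rightarrow> 'a"
  assumes "compact (UNIV :: 'a set)"
    and "continuous_on UNIV f"
    and finite: "\<And>n. \<exists>z. \<forall>i\<le>n. dist ((f ^^ i) z) (xs i) \<le> \<epsilon>"
  shows "\<exists>x. shadows f \<epsilon> x xs"
proof -
  define K where "K i = {z. dist ((f ^^ i) z) (xs i) \<le> \<epsilon>}" for i
  have "UNIV \<inter> (\<Inter>i\<in>UNIV. K i) \<noteq> {}"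
  proof (rule compact_imp_fip_image[OF \<open>compact UNIV\<close>])
    show "closed (K i)" for i
      unfolding K_def
      by (intro closed_Collect_le continuous_on_dist continuous_on_funpow assms continuous_on_const)
  next
    fix I :: "nat set"
    assume "finite I"
    then obtain n where "\<forall>i\<in>I. i \<le> n" using finite_nat_set_iff_bounded_le by blast
    moreover obtain z where "\<forall>i\<le>n. dist ((f ^^ i) z) (xs i) \<le> \<epsilon>" using finite by blast
    ultimately show "UNIV \<inter> (\<Inter>i\<in>I. K i) \<noteq> {}" unfolding K_def by blast
  qed
  then show ?thesis unfolding shadows_def K_def by blast
qed

lemma cball_subset_image_imp_lipschitz_shadowing:
  fixes f :: "'a::metric_space \<Rightarrow> 'a"
  assumes "compact (UNIV :: 'a set)"
    and ultra: "ultrametric_space TYPE('a)"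
    and L: "0 < L" "L < 1"
    and "continuous_on UNIV f"
    and "\<exists>\<delta>0>0. \<forall>\<delta> x. 0 < \<delta> \<and> \<delta> \<le> \<delta>0 \<longrightarrow> cball (f x) \<delta> \<subseteq> f ` cball x (L * \<delta>)"
  shows "lipschitz_shadowing L f"
proof -
  obtain \<delta>0 where "\<delta>0 > 0" and cover:
    "\<And>\<delta> x. 0 < \<delta> \<Longrightarrow> \<delta> \<le> \<delta>0 \<Longrightarrow> cball (f x) \<delta> \<subseteq> f ` cball x (L * \<delta>)"
    using assms(6) by blast
  have "\<exists>x. shadows f (L * \<delta>) x xs"
    if \<delta>: "0 < \<delta>" "\<delta> \<le> \<delta>0" and "pseudo_orbit f \<delta> xs" for \<delta> xs
  proof -
    have "L * \<delta> \<le> \<delta>" using L \<delta> by simp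
    have cover_\<delta>: "cball (f x) \<delta> \<subseteq> f ` cball x (L * \<delta>)" for x
      using cover \<delta> by simp
    have "dist (xs n) (xs n) \<le> L * \<delta>" for n
      using L \<delta> by simp
    then have "\<exists>z. \<forall>i\<le>n. dist ((f ^^ i) z) (xs i) \<le> L * \<delta>" for n
      using cball_subset_image_imp_finite_shadowing[OF ultra \<open>L * \<delta> \<le> \<delta>\<close> cover_\<delta>
          \<open>pseudo_orbit f \<delta> xs\<close>] by blast
    then show ?thesis using shadows_if_finitely_shadowed assms by blast
  qed
  then show ?thesis unfolding lipschitz_shadowing_def using \<open>\<delta>0 > 0\<close> by blast
qed

theorem theorem1p6:
  fixes f :: "'a::metric_space \<Rightarrow> 'a" and L :: real
  assumes "compact (UNIV :: 'a set)"
    and "ultrametric_space TYPE('a)"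
    and "0 < L" and "L < 1"
    and "continuous_on UNIV f"
  shows "lipschitz_shadowing L f \<longleftrightarrow>
         (\<exists>\<delta>0>0. \<forall>\<delta> x. 0 < \<delta> \<and> \<delta> \<le> \<delta>0 \<longrightarrow> cball (f x) \<delta> \<subseteq> f ` cball x (L * \<delta>))"
  using lipschitz_shadowing_imp_cball_subset_image[OF assms]
    cball_subset_image_imp_lipschitz_shadowing[OF assms]
  by blast

end
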